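(* Let $H=(V,E)$ be a graph, $t\ge 1$ an integer, and let $E_1,\dots,E_s\subseteq E$ be sets of edges each of size at most $t$, such that for every $1\le i<j\le s$ the graph $(V,E\setminus(E_i\cup E_j))$ is disconnected. If $s>(2^t+1)2^{t-1}$, then $m(H)\le 2^t$.
   Context: All graphs are finite and simple. For graphs $G_1=(V,E_1)$, $G_2=(V,E_2)$ on the same vertex set, their symmetric difference is the graph $(V,E_1\oplus E_2)$, where $E_1\oplus E_2$ is the set of edges belonging to exactly one of $E_1,E_2$. For a graph $H=(V,E)$, a spanning subgraph of $H$ is a graph $(V,E')$ with $E'\subseteq E$. A connectivity code for $H$ is a collection $\mathcal G$ of distinct spanning subgraphs of $H$ such that the symmetric difference of any two distinct members of $\mathcal G$ is a connected graph on the vertex set $V$. $m(H)$ denotes the maximum cardinality of a connectivity code for $H$. *)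

theory Defs
  imports Main
begin

definition simple_graph :: "'a set \<Rightarrow> 'a set set \<Rightarrow> bool" where
  "simple_graph V E \<longleftrightarrow> finite V \<and> (\<forall>e\<in>E. e \<subseteq> V \<and> card e = 2)"

definition adj_rel :: "'a set set \<Rightarrow> ('a \<times> 'a) set" where
  "adj_rel E = {(u, v). {u, v} \<in> E}"

definition connected_graph :: "'a set \<Rightarrow> 'a set set \<Rightarrow> bool" where
  "connected_graph V E \<longleftrightarrow> V \<noteq> {} \<and> (\<forall>u\<in>V. \<forall>v\<in>V. (u, v) \<in> (adj_rel E)\<^sup>*)"

text \<open>A connectivity code for H = (V,E): a collection of distinct spanning subgraphs (given by
  their edge sets E' \<subseteq> E) such that the symmetric difference of any two distinct members is
  a connected graph on V.\<close>

definition connectivity_code :: "'a set \<Rightarrow> 'a set set \<Rightarrow> 'a set set set \<Rightarrow> bool" where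
  "connectivity_code V E G \<longleftrightarrow>
     (\<forall>F\<in>G. F \<subseteq> E) \<and>
     (\<forall>F1\<in>G. \<forall>F2\<in>G. F1 \<noteq> F2 \<longrightarrow> connected_graph V ((F1 - F2) \<union> (F2 - F1)))"

definition max_code :: "'a set \<Rightarrow> 'a set set \<Rightarrow> nat" where
  "max_code V E = Max (card ` {G. connectivity_code V E G})"

end

theory Submission
  imports Defs
begin

text \<open>Suppose a connectivity code had \<open>2^t + 1\<close> members. Each \<open>E\<^sub>i\<close> has at most \<open>2^t\<close>
  subsets, so by pigeonhole two codewords agree on \<open>E\<^sub>i\<close>; this assigns to every index \<open>i\<close> a
  pair of codewords. There are only \<open>(2^t + 1) 2^(t-1) < s\<close> pairs, so two indices \<open>i < j\<close> get
  the same pair. The symmetric difference of that pair is connected but avoids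
  \<open>E\<^sub>i \<union> E\<^sub>j\<close>, so \<open>(V, E - (E\<^sub>i \<union> E\<^sub>j))\<close> would be connected.\<close>

lemma connected_graph_mono:
  assumes "connected_graph V A" "A \<subseteq> B"
  shows "connected_graph V B"
proof -
  have "adj_rel A \<subseteq> adj_rel B" using assms(2) unfolding adj_rel_def by auto
  hence "(adj_rel A)\<^sup>* \<subseteq> (adj_rel B)\<^sup>*" by (rule rtrancl_mono)
  thus ?thesis using assms(1) unfolding connected_graph_def by blast
qed

lemma connectivity_code_agree_connected:
  assumes "connectivity_code V E G" "B \<subseteq> G" "card B = 2"
    and "\<forall>F\<in>B. \<forall>F'\<in>B. F \<inter> X = F' \<inter> X"
  shows "connected_graph V (E - X)"
proof -
  from assms(3) obtain F1 F2 where B: "B = {F1, F2}" "F1 \<noteq> F2"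
    unfolding card_2_iff by blast
  have "F1 \<in> G" "F2 \<in> G" using assms(2) B(1) by blast+
  have "F1 \<inter> X = F2 \<inter> X" using assms(4) B(1) by blast
  show ?thesis
  proof (rule connected_graph_mono)
    show "connected_graph V ((F1 - F2) \<union> (F2 - F1))"
      using assms(1) \<open>F1 \<in> G\<close> \<open>F2 \<in> G\<close> B(2) unfolding connectivity_code_def by blast
    show "(F1 - F2) \<union> (F2 - F1) \<subseteq> E - X"
      using assms(1) \<open>F1 \<in> G\<close> \<open>F2 \<in> G\<close> \<open>F1 \<inter> X = F2 \<inter> X\<close>
      unfolding connectivity_code_def by blast
  qed
qed

lemma exists_pair_agree_on:
  assumes "finite S" "2 ^ card S < card A"
  shows "\<exists>B\<subseteq>A. card B = 2 \<and> (\<forall>F\<in>B. \<forall>F'\<in>B. F \<inter> S = F' \<inter> S)"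
proof -
  have "card ((\<lambda>F. F \<inter> S) ` A) \<le> card (Pow S)"
    by (rule card_mono) (auto simp: assms(1))
  hence "\<not> inj_on (\<lambda>F. F \<inter> S) A"
    using assms by (metis card_Pow card_image not_le)
  then obtain F1 F2 where "F1 \<in> A" "F2 \<in> A" "F1 \<noteq> F2" "F1 \<inter> S = F2 \<inter> S"
    unfolding inj_on_def by blast
  hence "{F1, F2} \<subseteq> A \<and> card {F1, F2} = 2 \<and> (\<forall>F\<in>{F1, F2}. \<forall>F'\<in>{F1, F2}. F \<inter> S = F' \<inter> S)"
    by auto
  thus ?thesis by blast
qed

lemma pow2_plus_one_choose_two:
  assumes "t \<ge> 1"
  shows "(2 ^ t + 1) choose 2 = (2 ^ t + 1) * 2 ^ (t - 1)"
proof -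
  obtain k where t: "t = Suc k" using assms by (cases t) auto
  have "(2 ^ t + 1) choose 2 = (2 ^ t + 1) * 2 ^ t div 2" by (simp add: choose_two)
  also have "\<dots> = (2 ^ t + 1) * 2 ^ (t - 1)" by (simp add: t)
  finally show ?thesis .
qed

lemma exists_lt_eq_of_card_lt:
  assumes "f ` {1..s} \<subseteq> P" "finite P" "card P < s"
  shows "\<exists>i j. 1 \<le> i \<and> i < j \<and> j \<le> s \<and> f i = f j"
proof -
  have "\<not> inj_on f {1..s}"
    using card_inj_on_le[OF _ assms(1,2)] assms(3) by auto
  then obtain i j where "i \<in> {1..s}" "j \<in> {1..s}" "i \<noteq> j" "f i = f j"
    unfolding inj_on_def by blast
  thus ?thesis by (metis atLeastAtMost_iff linorder_neqE_nat)
qed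

lemma connectivity_code_card_le:
  fixes Es :: "nat \<Rightarrow> 'a set set"
  assumes "finite E" "t \<ge> 1"
    and small: "\<And>i. 1 \<le> i \<Longrightarrow> i \<le> s \<Longrightarrow> Es i \<subseteq> E \<and> card (Es i) \<le> t"
    and disconnected: "\<And>i j. 1 \<le> i \<Longrightarrow> i < j \<Longrightarrow> j \<le> s \<Longrightarrow>
           \<not> connected_graph V (E - (Es i \<union> Es j))"
    and many: "s > (2 ^ t + 1) * 2 ^ (t - 1)"
    and code: "connectivity_code V E G"
  shows "card G \<le> 2 ^ t"
proof (rule ccontr)
  assume "\<not> card G \<le> 2 ^ t"
  hence "2 ^ t + 1 \<le> card G" by simp
  then obtain G' where G': "G' \<subseteq> G" "card G' = 2 ^ t + 1"
    by (rule obtain_subset_with_card_n)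
  hence "finite G'" by (simp add: card_ge_0_finite)
  define P where "P = {B. B \<subseteq> G' \<and> card B = 2}"
  have "finite P" unfolding P_def using \<open>finite G'\<close> by simp
  have card_P: "card P < s"
    unfolding P_def n_subsets[OF \<open>finite G'\<close>] G'(2) pow2_plus_one_choose_two[OF \<open>t \<ge> 1\<close>]
    using many .
  have "\<forall>i\<in>{1..s}. \<exists>B. B \<in> P \<and> (\<forall>F\<in>B. \<forall>F'\<in>B. F \<inter> Es i = F' \<inter> Es i)"
  proof
    fix i assume "i \<in> {1..s}"
    hence "Es i \<subseteq> E" "card (Es i) \<le> t" using small by auto
    hence "finite (Es i)" using \<open>finite E\<close> finite_subset by blast
    have "(2::nat) ^ card (Es i) \<le> 2 ^ t"
      using \<open>card (Es i) \<le> t\<close> by (rule power_increasing) simp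
    hence "2 ^ card (Es i) < card G'" using G'(2) by linarith
    from exists_pair_agree_on[OF \<open>finite (Es i)\<close> this]
    show "\<exists>B. B \<in> P \<and> (\<forall>F\<in>B. \<forall>F'\<in>B. F \<inter> Es i = F' \<inter> Es i)"
      unfolding P_def by blast
  qed
  from bchoice[OF this] obtain p
    where p: "\<forall>i\<in>{1..s}. p i \<in> P \<and> (\<forall>F\<in>p i. \<forall>F'\<in>p i. F \<inter> Es i = F' \<inter> Es i)" ..
  then have "p ` {1..s} \<subseteq> P" by blast
  from exists_lt_eq_of_card_lt[OF this \<open>finite P\<close> card_P]
  obtain i j where ij: "1 \<le> i" "i < j" "j \<le> s" "p i = p j" by blast
  then have "i \<in> {1..s}" "j \<in> {1..s}" by auto
  then have "p i \<in> P"
    and agree_i: "\<forall>F\<in>p i. \<forall>F'\<in>p i. F \<inter> Es i = F' \<inter> Es i"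
    and agree_j: "\<forall>F\<in>p j. \<forall>F'\<in>p j. F \<inter> Es j = F' \<inter> Es j"
    using p by blast+
  have "p i \<subseteq> G" "card (p i) = 2" using \<open>p i \<in> P\<close> G'(1) unfolding P_def by auto
  moreover have "\<forall>F\<in>p i. \<forall>F'\<in>p i. F \<inter> (Es i \<union> Es j) = F' \<inter> (Es i \<union> Es j)"
  proof (intro ballI)
    fix F F' assume "F \<in> p i" "F' \<in> p i"
    then have "F \<inter> Es i = F' \<inter> Es i" "F \<inter> Es j = F' \<inter> Es j"
      using agree_i agree_j ij(4) by blast+
    then show "F \<inter> (Es i \<union> Es j) = F' \<inter> (Es i \<union> Es j)" by (simp add: Int_Un_distrib)
  qed
  ultimately have "connected_graph V (E - (Es i \<union> Es j))"
    by (rule connectivity_code_agree_connected[OF code])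
  with disconnected[OF ij(1-3)] show False ..
qed

lemma max_code_le:
  assumes "finite E" "\<And>G. connectivity_code V E G \<Longrightarrow> card G \<le> n"
  shows "max_code V E \<le> n"
proof -
  have "{G. connectivity_code V E G} \<subseteq> Pow (Pow E)" unfolding connectivity_code_def by auto
  hence "finite {G. connectivity_code V E G}" using assms(1) by (meson finite_Pow_iff finite_subset)
  moreover have "connectivity_code V E {}" unfolding connectivity_code_def by simp
  ultimately show ?thesis
    unfolding max_code_def using assms(2) by (subst Max_le_iff) auto
qed

theorem lemma3p1:
  fixes V :: "'a set" and E :: "'a set set" and t s :: nat and Es :: "nat \<Rightarrow> 'a set set"
  assumes "simple_graph V E"
    and "t \<ge> 1"
    and "\<And>i. 1 \<le> i \<Longrightarrow> i \<le> s \<Longrightarrow> Es i \<subseteq> E \<and> card (Es i) \<le> t"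
    and "\<And>i j. 1 \<le> i \<Longrightarrow> i < j \<Longrightarrow> j \<le> s \<Longrightarrow>
           \<not> connected_graph V (E - (Es i \<union> Es j))"
    and "s > (2 ^ t + 1) * 2 ^ (t - 1)"
  shows "max_code V E \<le> 2 ^ t"
proof -
  have "E \<subseteq> Pow V" "finite V" using assms(1) unfolding simple_graph_def by auto
  hence "finite E" by (meson finite_Pow_iff finite_subset)
  thus ?thesis
    by (rule max_code_le) (rule connectivity_code_card_le[OF \<open>finite E\<close> assms(2-5)])
qed

end
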